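(* Let $G$ be a connected chordal graph that is not complete, and let $\mathbb S=\{S_1,\dots,S_r\}$ be its set of minimal vertex separators. Then $\kappa(G)=a(G)$ if and only if $\bigcap_{i=1}^r S_i$ is itself a minimal vertex separator of $G$ all of whose vertices are universal vertices of $G$. Moreover, if $G$ has a minimal vertex separator $S$ consisting of universal vertices, then $S$ is contained in every minimal vertex separator of $G$, and it is the unique minimal vertex separator of $G$ consisting of universal vertices.
   Context: All graphs are finite, simple and undirected. A graph is chordal if every cycle of length at least four has a chord. For non-adjacent vertices $u,v$, a set $S\subset V$ is a $uv$-separator if $u$ and $v$ lie in distinct connected components of $G[V\setminus S]$; it is a minimal $uv$-separator if no proper subset of $S$ is a $uv$-separator. A minimal vertex separator is a set that is a minimal $uv$-separator for some pair of non-adjacent vertices $u,v$. The Laplacian matrix is $L(G)=D(G)-A(G)$ (degree matrix minus adjacency matrix); $a(G)$, the algebraic connectivity, is the second smallest Laplacian eigenvalue (counted with multiplicity). $\kappa(G)$ is the vertex connectivity, i.e. the minimum size of a set whose removal disconnects $G$. A vertex is universal if it is adjacent to all other vertices. *)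

theory Defs
  imports "Jordan_Normal_Form.Char_Poly"
begin

definition simple_graph :: "nat \<Rightarrow> (nat \<Rightarrow> nat \<Rightarrow> bool) \<Rightarrow> bool" where
  "simple_graph n E \<longleftrightarrow> (\<forall>i j. E i j \<longrightarrow> i < n \<and> j < n \<and> i \<noteq> j \<and> E j i)"

definition verts :: "nat \<Rightarrow> nat set" where
  "verts n = {0..<n}"

definition induced_rel :: "(nat \<Rightarrow> nat \<Rightarrow> bool) \<Rightarrow> nat set \<Rightarrow> (nat \<times> nat) set" where
  "induced_rel E W = {(x, y). x \<in> W \<and> y \<in> W \<and> E x y}"

definition connected_on :: "(nat \<Rightarrow> nat \<Rightarrow> bool) \<Rightarrow> nat set \<Rightarrow> bool" where
  "connected_on E W \<longleftrightarrow> (\<forall>u\<in>W. \<forall>v\<in>W. (u, v) \<in> (induced_rel E W)\<^sup>*)"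

definition complete_graph :: "nat \<Rightarrow> (nat \<Rightarrow> nat \<Rightarrow> bool) \<Rightarrow> bool" where
  "complete_graph n E \<longleftrightarrow> (\<forall>i\<in>verts n. \<forall>j\<in>verts n. i \<noteq> j \<longrightarrow> E i j)"

text \<open>Chordal: every cycle (distinct vertices, consecutive ones adjacent, cyclically)
  of length at least four has a chord, i.e. an edge between two non-consecutive cycle vertices.\<close>
definition chordal :: "nat \<Rightarrow> (nat \<Rightarrow> nat \<Rightarrow> bool) \<Rightarrow> bool" where
  "chordal n E \<longleftrightarrow>
    (\<forall>cs. length cs \<ge> 4 \<and> distinct cs \<and> set cs \<subseteq> verts n \<and>
          (\<forall>i < length cs. E (cs ! i) (cs ! ((i + 1) mod length cs)))
      \<longrightarrow> (\<exists>i < length cs. \<exists>j < length cs. i \<noteq> j \<and>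
             j \<noteq> (i + 1) mod length cs \<and> i \<noteq> (j + 1) mod length cs \<and> E (cs ! i) (cs ! j)))"

definition uv_separator :: "nat \<Rightarrow> (nat \<Rightarrow> nat \<Rightarrow> bool) \<Rightarrow> nat set \<Rightarrow> nat \<Rightarrow> nat \<Rightarrow> bool" where
  "uv_separator n E S u v \<longleftrightarrow> S \<subseteq> verts n \<and> u \<in> verts n - S \<and> v \<in> verts n - S \<and>
     (u, v) \<notin> (induced_rel E (verts n - S))\<^sup>*"

definition minimal_uv_separator :: "nat \<Rightarrow> (nat \<Rightarrow> nat \<Rightarrow> bool) \<Rightarrow> nat set \<Rightarrow> nat \<Rightarrow> nat \<Rightarrow> bool" where
  "minimal_uv_separator n E S u v \<longleftrightarrow> uv_separator n E S u v \<and>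
     (\<forall>T. T \<subset> S \<longrightarrow> \<not> uv_separator n E T u v)"

definition minimal_vertex_separator :: "nat \<Rightarrow> (nat \<Rightarrow> nat \<Rightarrow> bool) \<Rightarrow> nat set \<Rightarrow> bool" where
  "minimal_vertex_separator n E S \<longleftrightarrow>
     (\<exists>u\<in>verts n. \<exists>v\<in>verts n. u \<noteq> v \<and> \<not> E u v \<and> minimal_uv_separator n E S u v)"

definition universal :: "nat \<Rightarrow> (nat \<Rightarrow> nat \<Rightarrow> bool) \<Rightarrow> nat \<Rightarrow> bool" where
  "universal n E x \<longleftrightarrow> x \<in> verts n \<and> (\<forall>w\<in>verts n. w \<noteq> x \<longrightarrow> E x w)"

definition vertex_connectivity :: "nat \<Rightarrow> (nat \<Rightarrow> nat \<Rightarrow> bool) \<Rightarrow> nat" where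
  "vertex_connectivity n E =
     Min {card S | S. S \<subseteq> verts n \<and> \<not> connected_on E (verts n - S)}"

definition laplacian :: "nat \<Rightarrow> (nat \<Rightarrow> nat \<Rightarrow> bool) \<Rightarrow> real mat" where
  "laplacian n E = mat n n (\<lambda>(i, j).
     (if i = j then real (card {k. k < n \<and> E i k}) else 0) - (if E i j then 1 else 0))"

text \<open>Second smallest eigenvalue counted with (algebraic) multiplicity: the least eigenvalue mu
  such that the eigenvalues \<le> mu, counted with multiplicity as roots of the
  characteristic polynomial, number at least two.\<close>
definition second_smallest_eigenvalue :: "real mat \<Rightarrow> real" where
  "second_smallest_eigenvalue A =
     (LEAST mu. eigenvalue A mu \<and>
        (\<Sum>nu \<in> {nu. eigenvalue A nu \<and> nu \<le> mu}. order nu (char_poly A)) \<ge> 2)"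

definition algebraic_connectivity :: "nat \<Rightarrow> (nat \<Rightarrow> nat \<Rightarrow> bool) \<Rightarrow> real" where
  "algebraic_connectivity n E = second_smallest_eigenvalue (laplacian n E)"

end

(*
  A universal vertex lies in every set whose removal disconnects G.  Hence a minimal separator S
  of universal vertices is contained in every minimal separator, so it is their intersection, and
  kappa(G) = |S|.

  For a(G) we use the Courant-Fischer description of the second smallest Laplacian eigenvalue,
  based on an orthogonal diagonalisation of the Laplacian.  If S disconnects G, the vector that
  is constant on the two sides of a split of V - S, zero on S and orthogonal to the all-ones
  vector has Rayleigh quotient at most |S|, with equality exactly when every vertex outside S is
  adjacent to all of S.  When S consists of universal vertices, every non-edge lies inside V - S,
  which bounds the Rayleigh quotient of any vector orthogonal to the all-ones vector from below
  by |S|; so a(G) = |S| = kappa(G).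

  Conversely, if kappa(G) = a(G) and S is a minimum disconnecting set, the test vector forces S
  to be completely joined to V - S.  Any two vertices x, y of S together with two non-adjacent
  vertices u, v separated by S form the 4-cycle x u y v, whose only possible chord is xy; so by
  chordality S is a clique and consists of universal vertices.
*)
theory Submission
  imports Defs
begin

section \<open>Orthogonal diagonalisation of real symmetric matrices\<close>

definition diag_of_list :: "'a :: zero list \<Rightarrow> 'a mat" where
  "diag_of_list ls = mat (length ls) (length ls) (\<lambda>(i, j). if i = j then ls ! i else 0)"

lemma diag_of_list_carrier [simp]: "diag_of_list ls \<in> carrier_mat (length ls) (length ls)"
  and dim_diag_of_list [simp]: "dim_row (diag_of_list ls) = length ls" "dim_col (diag_of_list ls) = length ls"
  by (simp_all add: diag_of_list_def)

lemma diag_of_list_Cons: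
  "diag_of_list (l # ls) = four_block_mat (mat 1 1 (\<lambda>_. l)) (0\<^sub>m 1 (length ls)) (0\<^sub>m (length ls) 1) (diag_of_list ls)"
  by (rule eq_matI) (auto simp: diag_of_list_def nth_Cons')

lemma index_mult_mat_sum:
  assumes "A \<in> carrier_mat nr n" "B \<in> carrier_mat n nc" "i < nr" "j < nc"
  shows "(A * B) $$ (i, j) = (\<Sum>k=0..<n. A $$ (i, k) * B $$ (k, j))"
  using assms by (simp add: scalar_prod_def)

lemma index_mult_diag_of_list:
  assumes "X \<in> carrier_mat nr n" "length ls = n" "i < nr" "j < n"
  shows "(X * diag_of_list ls) $$ (i, j) = X $$ (i, j) * ls ! j"
proof -
  have "(X * diag_of_list ls) $$ (i, j) = (\<Sum>k=0..<n. X $$ (i, k) * diag_of_list ls $$ (k, j))"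
    using assms by (intro index_mult_mat_sum) auto
  also have "\<dots> = (\<Sum>k=0..<n. if k = j then X $$ (i, k) * ls ! k else 0)"
    using assms by (intro sum.cong) (auto simp: diag_of_list_def)
  finally show ?thesis using assms by simp
qed

lemma symmetric_mat_complex_eigenvalue_real:
  fixes A :: "real mat"
  assumes A: "A \<in> carrier_mat n n" and sym: "A\<^sup>T = A"
    and z: "eigenvalue (map_mat complex_of_real A) z"
  shows "z \<in> \<real>"
proof -
  let ?a = "\<lambda>i j. complex_of_real (A $$ (i, j))"
  obtain w where w: "w \<in> carrier_vec n" "w \<noteq> 0\<^sub>v n" "map_mat complex_of_real A *\<^sub>v w = z \<cdot>\<^sub>v w"
    using z A unfolding eigenvalue_def eigenvector_def by auto
  have row: "(\<Sum>j=0..<n. ?a i j * w $ j) = z * w $ i" if "i < n" for i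
    using arg_cong[OF w(3), of "\<lambda>v. v $ i"] that A w(1)
    by (simp add: scalar_prod_def)
  have a_sym: "?a i j = ?a j i" if "i < n" "j < n" for i j
    using that A sym by (metis carrier_matD index_transpose_mat(1))
  define N where "N = w \<bullet>c w"
  have N: "N > 0" using w by (simp add: N_def)
  have N_sum: "N = (\<Sum>i=0..<n. w $ i * cnj (w $ i))"
    using w(1) by (simp add: N_def scalar_prod_def)
  txt \<open>Q = w* A w equals z |w|^2 and, A being real symmetric, also its own conjugate.\<close>
  define Q where "Q = (\<Sum>i=0..<n. cnj (w $ i) * (\<Sum>j=0..<n. ?a i j * w $ j))"
  have "Q = (\<Sum>i=0..<n. z * (w $ i * cnj (w $ i)))"
    by (auto simp: Q_def row intro!: sum.cong)
  then have "Q = z * N"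
    by (simp add: N_sum sum_distrib_left)
  moreover have "cnj Q = Q"
  proof -
    have "cnj Q = (\<Sum>i=0..<n. \<Sum>j=0..<n. w $ i * ?a i j * cnj (w $ j))"
      by (simp add: Q_def sum_distrib_left mult_ac)
    also have "\<dots> = (\<Sum>j=0..<n. \<Sum>i=0..<n. w $ i * ?a j i * cnj (w $ j))"
      by (subst sum.swap) (auto intro!: sum.cong simp: a_sym)
    also have "\<dots> = Q"
      by (simp add: Q_def sum_distrib_left mult_ac)
    finally show ?thesis .
  qed
  moreover have "cnj N = N" using N by (simp add: complex_eq_iff less_complex_def)
  ultimately have "cnj z * N = z * N" by (metis complex_cnj_mult)
  moreover have "N \<noteq> 0" using N by auto
  ultimately show ?thesis by (simp add: Reals_cnj_iff)
qed

lemma symmetric_mat_unit_eigenvector: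
  fixes A :: "real mat"
  assumes A: "A \<in> carrier_mat n n" and sym: "A\<^sup>T = A" and n: "n > 0"
  obtains l v where "v \<in> carrier_vec n" "v \<bullet> v = 1" "A *\<^sub>v v = l \<cdot>\<^sub>v v"
proof -
  let ?Ac = "map_mat complex_of_real A"
  obtain zs where cp: "char_poly ?Ac = (\<Prod>z\<leftarrow>zs. [:-z, 1:])" and len: "length zs = n"
    using char_poly_factorized[of ?Ac n] A by auto
  obtain z where "z \<in> set zs" using len n by (cases zs) auto
  then have "eigenvalue ?Ac z"
    using A by (simp add: eigenvalue_root_char_poly[of _ n] cp poly_prod_list prod_list_zero_iff)
  moreover from this obtain l where z: "z = complex_of_real l"
    using symmetric_mat_complex_eigenvalue_real[OF A sym] by (metis Reals_cases)
  ultimately have "poly (map_poly complex_of_real (char_poly A)) (complex_of_real l) = 0"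
    using A by (simp add: eigenvalue_root_char_poly[of _ n] of_real_hom.char_poly_hom)
  then have "eigenvalue A l"
    using A by (simp add: eigenvalue_root_char_poly[of _ n])
  then obtain v where v: "v \<in> carrier_vec n" "v \<noteq> 0\<^sub>v n" "A *\<^sub>v v = l \<cdot>\<^sub>v v"
    using A unfolding eigenvalue_def eigenvector_def by auto
  have pos: "v \<bullet> v > 0"
    using conjugate_square_greater_0_vec[OF v(1)] v(2) by simp
  define u where "u = (1 / sqrt (v \<bullet> v)) \<cdot>\<^sub>v v"
  have "u \<bullet> u = 1"
    using v(1) pos by (simp add: u_def)
  moreover have "A *\<^sub>v u = l \<cdot>\<^sub>v u"
    using v A by (simp add: u_def mult_mat_vec smult_smult_assoc mult.commute)
  moreover have "u \<in> carrier_vec n" using v(1) by (simp add: u_def)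
  ultimately show ?thesis using that by blast
qed

lemma sum_householder_square:
  fixes u :: "nat \<Rightarrow> real"
  assumes ij: "i < n" "j < n" and uu: "uu = (\<Sum>k=0..<n. u k * u k)" "uu \<noteq> 0"
  shows "(\<Sum>k=0..<n. ((if i = k then 1 else 0) - 2 * u i * u k / uu) *
                  ((if k = j then 1 else 0) - 2 * u k * u j / uu)) = (if i = j then 1 else 0)"
proof -
  let ?c = "4 * u i * u j / (uu * uu)"
  have "(\<Sum>k=0..<n. ((if i = k then 1 else 0) - 2 * u i * u k / uu) *
                 ((if k = j then 1 else 0) - 2 * u k * u j / uu))
     = (\<Sum>k=0..<n. (if k = j then (if i = j then 1 else 0) else 0) - (if k = i then 2 * u i * u j / uu else 0)
          - (if k = j then 2 * u i * u j / uu else 0) + ?c * (u k * u k))"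
    using uu(2) by (intro sum.cong) (auto simp: field_simps)
  also have "\<dots> = (if i = j then 1 else 0) - 2 * u i * u j / uu - 2 * u i * u j / uu + ?c * uu"
    using ij by (simp only: sum.distrib sum_subtractf sum.delta' sum_distrib_left[symmetric] uu(1)[symmetric])
      simp
  also have "\<dots> = (if i = j then 1 else 0)"
    using uu(2) by (simp add: field_simps)
  finally show ?thesis .
qed

lemma householder_involution:
  fixes u :: "nat \<Rightarrow> real"
  assumes uu: "uu = (\<Sum>k=0..<n. u k * u k)" "uu \<noteq> 0"
  defines "H \<equiv> mat n n (\<lambda>(i, j). (if i = j then 1 else 0) - 2 * u i * u j / uu)"
  shows "H\<^sup>T = H" and "H * H = 1\<^sub>m n"
proof -
  have H: "H \<in> carrier_mat n n" by (simp add: H_def)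
  show "H\<^sup>T = H" by (rule eq_matI) (auto simp: H_def mult.commute)
  show "H * H = 1\<^sub>m n"
  proof (rule eq_matI)
    fix i j assume "i < dim_row (1\<^sub>m n :: real mat)" "j < dim_col (1\<^sub>m n :: real mat)"
    then have ij: "i < n" "j < n" by auto
    have "(H * H) $$ (i, j) = (\<Sum>k=0..<n. H $$ (i, k) * H $$ (k, j))"
      using ij H by (intro index_mult_mat_sum) auto
    also have "\<dots> = (if i = j then 1 else 0)"
      using ij by (subst sum_householder_square[OF ij uu, symmetric]) (auto simp: H_def intro!: sum.cong)
    finally show "(H * H) $$ (i, j) = (1\<^sub>m n :: real mat) $$ (i, j)" using ij by simp
  qed (auto simp: H_def)
qed

lemma householder_reflection:
  fixes v :: "real vec"
  assumes v: "v \<in> carrier_vec n" "v \<bullet> v = 1" and n: "n > 0"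
  obtains H where "H \<in> carrier_mat n n" "H\<^sup>T = H" "H * H = 1\<^sub>m n" "col H 0 = v"
proof (cases "v $ 0 = 1")
  case True
  have "(\<Sum>i=0..<n. v $ i * v $ i) = 1"
    using v by (simp add: scalar_prod_def)
  then have "(\<Sum>i\<in>{0..<n} - {0}. v $ i * v $ i) = 0"
    using n True by (simp add: sum.remove[of "{0..<n}" 0])
  then have "v $ i = 0" if "i < n" "i \<noteq> 0" for i
    using that by (subst (asm) sum_nonneg_eq_0_iff) auto
  then have "col (1\<^sub>m n) 0 = v"
    using v n True by (intro eq_vecI) auto
  then show ?thesis using that[of "1\<^sub>m n"] by simp
next
  case False
  define u where "u i = v $ i - (if i = 0 then 1 else 0)" for i
  define uu where "uu = (\<Sum>k=0..<n. u k * u k)"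
  have "uu = (\<Sum>k=0..<n. v $ k * v $ k - 2 * (if k = 0 then v $ k else 0) + (if k = 0 then 1 else 0))"
    unfolding uu_def u_def by (intro sum.cong) (auto simp: field_simps)
  also have "\<dots> = 2 - 2 * v $ 0"
    using n v by (simp add: sum.distrib sum_subtractf sum_distrib_left[symmetric] scalar_prod_def)
  finally have uu_eq: "uu = - 2 * u 0" by (simp add: u_def)
  then have uu0: "uu \<noteq> 0" using False by (simp add: u_def)
  define H where "H = mat n n (\<lambda>(i, j). (if i = j then 1 else 0) - 2 * u i * u j / uu)"
  have "col H 0 = v"
  proof (rule eq_vecI)
    fix i assume "i < dim_vec v"
    then have "i < n" using v by simp
    moreover have "2 * u i * u 0 / uu = - u i" using uu0 by (simp add: uu_eq field_simps)
    ultimately show "col H 0 $ i = v $ i" using n by (simp add: H_def u_def)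
  qed (use v in \<open>auto simp: H_def\<close>)
  moreover have "H \<in> carrier_mat n n" by (simp add: H_def)
  ultimately show ?thesis
    using that householder_involution[OF uu_def uu0] unfolding H_def by blast
qed

lemma symmetric_mat_deflation:
  fixes A H :: "real mat"
  assumes A: "A \<in> carrier_mat (Suc m) (Suc m)" "A\<^sup>T = A"
    and H: "H \<in> carrier_mat (Suc m) (Suc m)" "H\<^sup>T = H" "H * H = 1\<^sub>m (Suc m)"
    and ev: "A *\<^sub>v col H 0 = l \<cdot>\<^sub>v col H 0"
  defines "B \<equiv> mat m m (\<lambda>(i, j). (H * A * H) $$ (Suc i, Suc j))"
  shows "H * A * H = four_block_mat (mat 1 1 (\<lambda>_. l)) (0\<^sub>m 1 m) (0\<^sub>m m 1) B" and "B\<^sup>T = B"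
proof -
  define A' where "A' = H * A * H"
  have A': "A' \<in> carrier_mat (Suc m) (Suc m)" using A H by (simp add: A'_def)
  have "A'\<^sup>T = H\<^sup>T * (H * A)\<^sup>T"
    using H A unfolding A'_def by (intro transpose_mult) auto
  also have "\<dots> = H * (A * H)"
    using H A by (subst transpose_mult) auto
  also have "\<dots> = A'"
    using H A unfolding A'_def by (intro assoc_mult_mat[symmetric]) auto
  finally have A'_sym: "A'\<^sup>T = A'" .
  have "col A' 0 = (H * A) *\<^sub>v col H 0"
    using H A unfolding A'_def by (intro col_mult2) auto
  also have "\<dots> = H *\<^sub>v (A *\<^sub>v col H 0)"
    using col_carrier_vec[OF _ H(1)] by (intro assoc_mult_mat_vec[OF H(1) A(1)]) simp
  also have "\<dots> = l \<cdot>\<^sub>v (H *\<^sub>v col H 0)"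
    using col_carrier_vec[OF _ H(1)] by (simp add: ev mult_mat_vec[OF H(1)])
  also have "H *\<^sub>v col H 0 = col (H * H) 0"
    using H by (intro col_mult2[symmetric]) auto
  finally have col_A': "col A' 0 = l \<cdot>\<^sub>v unit_vec (Suc m) 0"
    using H by simp
  have col0: "A' $$ (i, 0) = (if i = 0 then l else 0)" if "i < Suc m" for i
  proof -
    have "A' $$ (i, 0) = col A' 0 $ i" using A' that by simp
    then show ?thesis using that col_A' by simp
  qed
  have row0: "A' $$ (0, j) = (if j = 0 then l else 0)" if "j < Suc m" for j
  proof -
    have "A' $$ (0, j) = A'\<^sup>T $$ (j, 0)" using A' that by simp
    then show ?thesis using A'_sym col0[OF that] by simp
  qed
  show "H * A * H = four_block_mat (mat 1 1 (\<lambda>_. l)) (0\<^sub>m 1 m) (0\<^sub>m m 1) B"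
    unfolding A'_def[symmetric] using A' col0 row0 by (intro eq_matI) (auto simp: B_def A'_def[symmetric])
  show "B\<^sup>T = B"
  proof (rule eq_matI)
    fix i j assume "i < dim_row B" "j < dim_col B"
    then have ij: "Suc i < Suc m" "Suc j < Suc m" by (simp_all add: B_def)
    have "A' $$ (Suc j, Suc i) = A'\<^sup>T $$ (Suc i, Suc j)" using A' ij by simp
    then show "B\<^sup>T $$ (i, j) = B $$ (i, j)" using A'_sym ij by (simp add: B_def A'_def[symmetric])
  qed (simp_all add: B_def)
qed

lemma orthogonal_block_extension:
  fixes Q :: "real mat"
  assumes Q: "Q \<in> carrier_mat m m" "Q\<^sup>T * Q = 1\<^sub>m m" and ls: "length ls = m"
  defines "F \<equiv> four_block_mat (1\<^sub>m 1) (0\<^sub>m 1 m) (0\<^sub>m m 1) Q"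
  shows "F \<in> carrier_mat (Suc m) (Suc m)" and "F\<^sup>T * F = 1\<^sub>m (Suc m)"
    and "F * diag_of_list (l # ls) * F\<^sup>T
      = four_block_mat (mat 1 1 (\<lambda>_. l)) (0\<^sub>m 1 m) (0\<^sub>m m 1) (Q * diag_of_list ls * Q\<^sup>T)"
proof -
  show "F \<in> carrier_mat (Suc m) (Suc m)"
    using four_block_carrier_mat[OF one_carrier_mat[of 1] Q(1)] by (simp add: F_def)
  have FT: "F\<^sup>T = four_block_mat (1\<^sub>m 1) (0\<^sub>m 1 m) (0\<^sub>m m 1) Q\<^sup>T"
    unfolding F_def using Q by (subst transpose_four_block_mat[of _ 1 1 _ m _ m]) auto
  show "F\<^sup>T * F = 1\<^sub>m (Suc m)"
    unfolding FT unfolding F_def using Q by (subst mult_four_block_mat[of _ 1 1 _ m _ m _ _ 1 _ m]) auto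
  have "F * diag_of_list (l # ls) = four_block_mat (mat 1 1 (\<lambda>_. l)) (0\<^sub>m 1 m) (0\<^sub>m m 1) (Q * diag_of_list ls)"
    unfolding F_def diag_of_list_Cons using Q ls
    by (subst mult_four_block_mat[of _ 1 1 _ m _ m _ _ 1 _ m]) (auto simp: left_mult_zero_mat)
  also have "\<dots> * F\<^sup>T = four_block_mat (mat 1 1 (\<lambda>_. l)) (0\<^sub>m 1 m) (0\<^sub>m m 1) (Q * diag_of_list ls * Q\<^sup>T)"
    unfolding FT using Q ls
    by (subst mult_four_block_mat[of _ 1 1 _ m _ m _ _ 1 _ m]) (auto simp: left_mult_zero_mat)
  finally show "F * diag_of_list (l # ls) * F\<^sup>T = \<dots>" .
qed

text \<open>Induction on the dimension: a Householder reflection moving the first unit vector to an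
  eigenvector splits off a 1 x 1 block, and the remaining block is diagonalised recursively.\<close>
theorem symmetric_mat_orthogonal_diagonalization:
  fixes A :: "real mat"
  assumes "A \<in> carrier_mat n n" "A\<^sup>T = A"
  obtains P ls where "P \<in> carrier_mat n n" "P\<^sup>T * P = 1\<^sub>m n" "length ls = n"
    "A = P * diag_of_list ls * P\<^sup>T"
  using assms
proof (induction n arbitrary: A thesis)
  case 0
  have "A = 1\<^sub>m 0 * diag_of_list [] * (1\<^sub>m 0)\<^sup>T"
    using 0 by (intro eq_matI) (auto simp: diag_of_list_def)
  then show ?case using 0(1)[of "1\<^sub>m 0" "[]"] by simp
next
  case (Suc m)
  note A = Suc.prems(2,3)
  obtain l v where v: "v \<in> carrier_vec (Suc m)" "v \<bullet> v = 1" "A *\<^sub>v v = l \<cdot>\<^sub>v v"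
    using symmetric_mat_unit_eigenvector[OF A zero_less_Suc] by metis
  obtain H where H: "H \<in> carrier_mat (Suc m) (Suc m)" "H\<^sup>T = H" "H * H = 1\<^sub>m (Suc m)" "col H 0 = v"
    using householder_reflection[OF v(1,2) zero_less_Suc] by metis
  define B where "B = mat m m (\<lambda>(i, j). (H * A * H) $$ (Suc i, Suc j))"
  have HAH: "H * A * H = four_block_mat (mat 1 1 (\<lambda>_. l)) (0\<^sub>m 1 m) (0\<^sub>m m 1) B" and "B\<^sup>T = B"
    using symmetric_mat_deflation[OF A H(1-3), of l] v(3) H(4) unfolding B_def by auto
  obtain Q ls where Q: "Q \<in> carrier_mat m m" "Q\<^sup>T * Q = 1\<^sub>m m" and ls: "length ls = m"
    and B: "B = Q * diag_of_list ls * Q\<^sup>T"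
    using Suc.IH[of B] \<open>B\<^sup>T = B\<close> by (auto simp: B_def)
  define F where "F = four_block_mat (1\<^sub>m 1) (0\<^sub>m 1 m) (0\<^sub>m m 1) Q"
  have F: "F \<in> carrier_mat (Suc m) (Suc m)" "F\<^sup>T * F = 1\<^sub>m (Suc m)"
    "F * diag_of_list (l # ls) * F\<^sup>T = H * A * H"
    unfolding F_def HAH B by (rule orthogonal_block_extension[OF Q ls])+
  define P where "P = H * F"
  have PT: "P\<^sup>T = F\<^sup>T * H"
    using H F by (simp add: P_def transpose_mult[of _ "Suc m" "Suc m"])
  note assoc = assoc_mult_mat[of _ "Suc m" "Suc m" _ "Suc m" _ "Suc m"]
  have HHX: "H * (H * X) = X" if "X \<in> carrier_mat (Suc m) (Suc m)" for X
    using H that by (simp flip: assoc)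
  have D: "diag_of_list (l # ls) \<in> carrier_mat (Suc m) (Suc m)"
    using ls by (metis diag_of_list_carrier length_Cons)
  show ?case
  proof (rule Suc.prems(1))
    show "P \<in> carrier_mat (Suc m) (Suc m)" using H F by (simp add: P_def)
    show "length (l # ls) = Suc m" using ls by simp
    show "P\<^sup>T * P = 1\<^sub>m (Suc m)"
      unfolding PT unfolding P_def using H F by (simp add: assoc HHX)
    have "A = H * (H * A * H * H)"
      using H A by (simp add: assoc HHX)
    also have "\<dots> = P * diag_of_list (l # ls) * P\<^sup>T"
      unfolding PT unfolding P_def F(3)[symmetric] using H F(1) D by (simp add: assoc)
    finally show "A = P * diag_of_list (l # ls) * P\<^sup>T" .
  qed
qed

section \<open>Rayleigh quotients\<close>

definition quad_form :: "nat \<Rightarrow> (nat \<Rightarrow> nat \<Rightarrow> real) \<Rightarrow> (nat \<Rightarrow> real) \<Rightarrow> real" where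
  "quad_form n a y = (\<Sum>i=0..<n. \<Sum>k=0..<n. y i * a i k * y k)"

definition sq_norm :: "nat \<Rightarrow> (nat \<Rightarrow> real) \<Rightarrow> real" where
  "sq_norm n y = (\<Sum>i=0..<n. y i * y i)"

definition eigen_coord :: "nat \<Rightarrow> (nat \<Rightarrow> nat \<Rightarrow> real) \<Rightarrow> (nat \<Rightarrow> real) \<Rightarrow> nat \<Rightarrow> real" where
  "eigen_coord n P y j = (\<Sum>i=0..<n. P i j * y i)"

lemma sq_norm_pos:
  assumes "i < n" "y i \<noteq> 0"
  shows "sq_norm n y > 0"
proof -
  have "sq_norm n y \<ge> y i * y i"
    unfolding sq_norm_def by (rule member_le_sum) (use assms in auto)
  moreover have "y i * y i > 0" using assms(2) by (metis not_real_square_gt_zero)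
  ultimately show ?thesis by linarith
qed

lemma exists_nontrivial_zero_combination:
  fixes p q :: real
  obtains al be where "(al, be) \<noteq> (0, 0)" "al * p + be * q = 0"
proof (cases "p = 0 \<and> q = 0")
  case True
  then show ?thesis using that[of 1 0] by simp
next
  case False
  then show ?thesis using that[of q "- p"] by (auto simp: algebra_simps)
qed

text \<open>Entrywise form of a = P diag(ls) P^T with P orthogonal: the columns of P are an
  orthonormal eigenbasis of a, and eigen_coord gives the coordinates of a vector in this basis.\<close>
locale orthogonal_diagonalization =
  fixes n :: nat and P a :: "nat \<Rightarrow> nat \<Rightarrow> real" and ls :: "nat \<Rightarrow> real"
  assumes orthonormal_columns:
      "\<And>j k. j < n \<Longrightarrow> k < n \<Longrightarrow> (\<Sum>i=0..<n. P i j * P i k) = (if j = k then 1 else 0)"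
    and orthonormal_rows:
      "\<And>i k. i < n \<Longrightarrow> k < n \<Longrightarrow> (\<Sum>j=0..<n. P i j * P k j) = (if i = k then 1 else 0)"
    and entry_expansion: "\<And>i k. i < n \<Longrightarrow> k < n \<Longrightarrow> a i k = (\<Sum>j=0..<n. P i j * ls j * P k j)"
begin

lemma quad_form_eigen_coord: "quad_form n a y = (\<Sum>j=0..<n. ls j * (eigen_coord n P y j)\<^sup>2)"
proof -
  have "quad_form n a y = (\<Sum>i=0..<n. \<Sum>k=0..<n. \<Sum>j=0..<n. ls j * (P i j * y i) * (P k j * y k))"
    unfolding quad_form_def
    by (intro sum.cong refl) (simp add: entry_expansion sum_distrib_left sum_distrib_right mult_ac)
  also have "\<dots> = (\<Sum>j=0..<n. \<Sum>i=0..<n. \<Sum>k=0..<n. ls j * (P i j * y i) * (P k j * y k))"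
    by (subst sum.swap) (intro sum.cong refl sum.swap)
  also have "\<dots> = (\<Sum>j=0..<n. ls j * (eigen_coord n P y j)\<^sup>2)"
    unfolding eigen_coord_def power2_eq_square sum_product
    by (intro sum.cong refl) (simp add: sum_distrib_left mult_ac)
  finally show ?thesis .
qed

lemma sq_norm_eigen_coord: "sq_norm n y = (\<Sum>j=0..<n. (eigen_coord n P y j)\<^sup>2)"
proof -
  have "(\<Sum>j=0..<n. (eigen_coord n P y j)\<^sup>2) = (\<Sum>j=0..<n. \<Sum>i=0..<n. \<Sum>k=0..<n. P i j * y i * (P k j * y k))"
    unfolding eigen_coord_def power2_eq_square sum_product by simp
  also have "\<dots> = (\<Sum>i=0..<n. \<Sum>k=0..<n. \<Sum>j=0..<n. P i j * y i * (P k j * y k))"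
    by (subst sum.swap) (intro sum.cong refl sum.swap)
  also have "\<dots> = (\<Sum>i=0..<n. \<Sum>k=0..<n. y i * y k * (\<Sum>j=0..<n. P i j * P k j))"
    by (simp add: sum_distrib_left mult_ac)
  also have "\<dots> = (\<Sum>i=0..<n. \<Sum>k=0..<n. if k = i then y i * y i else 0)"
    by (intro sum.cong refl) (auto simp: orthonormal_rows)
  finally show ?thesis by (simp add: sq_norm_def)
qed

lemma quad_form_minus_sq_norm:
  "quad_form n a y - c * sq_norm n y = (\<Sum>j=0..<n. (ls j - c) * (eigen_coord n P y j)\<^sup>2)"
  unfolding quad_form_eigen_coord sq_norm_eigen_coord
  by (simp add: sum_distrib_left sum_subtractf algebra_simps)

lemma eigen_coord_column: "j < n \<Longrightarrow> k < n \<Longrightarrow> eigen_coord n P (\<lambda>i. P i j) k = (if k = j then 1 else 0)"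
  using orthonormal_columns[of k j] by (simp add: eigen_coord_def)

lemma eigen_coord_linear:
  "eigen_coord n P (\<lambda>i. al * x i + be * w i) k = al * eigen_coord n P x k + be * eigen_coord n P w k"
  unfolding eigen_coord_def by (simp add: sum.distrib sum_distrib_left algebra_simps)

lemma combination_eigen_coord_zero:
  assumes "card J \<le> 1" "finite J"
  obtains al be where "(al, be) \<noteq> (0, 0)" "\<forall>j\<in>J. eigen_coord n P (\<lambda>i. al * u i + be * x i) j = 0"
proof (cases "J = {}")
  case True
  then show ?thesis using that[of 1 0] by simp
next
  case False
  then obtain j0 where J: "J = {j0}"
    using assms by (metis card_0_eq card_le_Suc0_iff_eq ex_in_conv le_Suc_eq One_nat_def singletonI subsetI
        subset_singletonD)
  obtain al be where "(al, be) \<noteq> (0, 0)" "al * eigen_coord n P u j0 + be * eigen_coord n P x j0 = 0"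
    using exists_nontrivial_zero_combination by metis
  then show ?thesis using that[of al be] J by (simp add: eigen_coord_linear)
qed

text \<open>The two halves of the Courant-Fischer characterisation of the second smallest eigenvalue,
  tested on the plane spanned by u and x; below, u is the all-ones vector.\<close>
lemma two_eigenvalues_less:
  assumes "\<And>al be. (al, be) \<noteq> (0, 0) \<Longrightarrow>
     quad_form n a (\<lambda>i. al * u i + be * x i) < c * sq_norm n (\<lambda>i. al * u i + be * x i)"
  shows "2 \<le> card {j\<in>{0..<n}. ls j < c}"
proof (rule ccontr)
  let ?J = "{j\<in>{0..<n}. ls j < c}"
  assume "\<not> 2 \<le> card ?J"
  then have "card ?J \<le> 1" "finite ?J" by simp_all
  then obtain al be where ab: "(al, be) \<noteq> (0, 0)"
    and z: "\<forall>j\<in>?J. eigen_coord n P (\<lambda>i. al * u i + be * x i) j = 0"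
    by (rule combination_eigen_coord_zero)
  have "quad_form n a (\<lambda>i. al * u i + be * x i) - c * sq_norm n (\<lambda>i. al * u i + be * x i) \<ge> 0"
    unfolding quad_form_minus_sq_norm
  proof (intro sum_nonneg)
    fix j assume "j \<in> {0..<n}"
    then show "(ls j - c) * (eigen_coord n P (\<lambda>i. al * u i + be * x i) j)\<^sup>2 \<ge> 0"
      using z by (cases "ls j < c") auto
  qed
  then show False using assms[OF ab] by simp
qed

lemma two_eigenvalues_le:
  assumes "\<And>al be. (al, be) \<noteq> (0, 0) \<Longrightarrow> sq_norm n (\<lambda>i. al * u i + be * x i) > 0 \<and>
     quad_form n a (\<lambda>i. al * u i + be * x i) \<le> c * sq_norm n (\<lambda>i. al * u i + be * x i)"
  shows "2 \<le> card {j\<in>{0..<n}. ls j \<le> c}"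
proof (rule ccontr)
  let ?J = "{j\<in>{0..<n}. ls j \<le> c}"
  assume "\<not> 2 \<le> card ?J"
  then have "card ?J \<le> 1" "finite ?J" by simp_all
  then obtain al be where ab: "(al, be) \<noteq> (0, 0)"
    and z: "\<forall>j\<in>?J. eigen_coord n P (\<lambda>i. al * u i + be * x i) j = 0"
    by (rule combination_eigen_coord_zero)
  define y where "y = (\<lambda>i. al * u i + be * x i)"
  have "(\<Sum>j=0..<n. (eigen_coord n P y j)\<^sup>2) > 0"
    using assms[OF ab] unfolding y_def sq_norm_eigen_coord by simp
  then obtain j0 where j0: "j0 < n" "eigen_coord n P y j0 \<noteq> 0"
    by (metis (no_types, lifting) atLeastLessThan_iff less_irrefl power_zero_numeral sum.neutral)
  have zy: "eigen_coord n P y j = 0" if "j < n" "ls j \<le> c" for j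
    using z that by (simp add: y_def)
  have "c < ls j0" using zy j0 by force
  have "quad_form n a y - c * sq_norm n y > 0"
    unfolding quad_form_minus_sq_norm
  proof (rule sum_pos2)
    show "(ls j0 - c) * (eigen_coord n P y j0)\<^sup>2 > 0"
      using \<open>c < ls j0\<close> j0 by simp
    fix j assume "j \<in> {0..<n}"
    then show "(ls j - c) * (eigen_coord n P y j)\<^sup>2 \<ge> 0"
      using zy by (cases "ls j \<le> c") auto
  qed (use j0 in auto)
  then show False using assms[OF ab] by (simp add: y_def)
qed

lemma at_most_one_eigenvalue_less:
  assumes "\<And>y. (\<Sum>i=0..<n. u i * y i) = 0 \<Longrightarrow> quad_form n a y \<ge> c * sq_norm n y"
  shows "card {j\<in>{0..<n}. ls j < c} \<le> 1"
proof (rule ccontr)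
  let ?J = "{j\<in>{0..<n}. ls j < c}"
  assume "\<not> card ?J \<le> 1"
  then have "\<not> (\<forall>j\<in>?J. \<forall>k\<in>?J. j = k)"
    using card_le_Suc0_iff_eq[of ?J] by simp
  then obtain j1 j2 where j: "j1 < n" "j2 < n" "ls j1 < c" "ls j2 < c" "j1 \<noteq> j2"
    by auto
  obtain al be where ab: "(al, be) \<noteq> (0, 0)"
    and orth: "al * (\<Sum>i=0..<n. u i * P i j1) + be * (\<Sum>i=0..<n. u i * P i j2) = 0"
    by (rule exists_nontrivial_zero_combination)
  define y where "y = (\<lambda>i. al * P i j1 + be * P i j2)"
  have "(\<Sum>i=0..<n. u i * y i) = 0"
    using orth by (simp add: y_def sum.distrib sum_distrib_left algebra_simps)
  then have ge: "quad_form n a y - c * sq_norm n y \<ge> 0" using assms by simp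
  have "(ls k - c) * (eigen_coord n P y k)\<^sup>2 =
      (if k = j1 then (ls j1 - c) * al\<^sup>2 else 0) + (if k = j2 then (ls j2 - c) * be\<^sup>2 else 0)"
    if "k < n" for k
    using that j unfolding y_def eigen_coord_linear by (simp add: eigen_coord_column)
  then have "quad_form n a y - c * sq_norm n y = (ls j1 - c) * al\<^sup>2 + (ls j2 - c) * be\<^sup>2"
    using j unfolding quad_form_minus_sq_norm by (simp add: sum.distrib)
  also have "\<dots> < 0"
  proof -
    have "(ls j1 - c) * al\<^sup>2 \<le> 0" "(ls j2 - c) * be\<^sup>2 \<le> 0"
      using j by (simp_all add: mult_nonpos_nonneg)
    moreover have "(ls j1 - c) * al\<^sup>2 < 0 \<or> (ls j2 - c) * be\<^sup>2 < 0"
      using j ab by (auto simp: mult_neg_pos)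
    ultimately show ?thesis by linarith
  qed
  finally show False using ge by simp
qed
end

lemma char_poly_diag_of_list: "char_poly (diag_of_list ls) = (\<Prod>l\<leftarrow>ls. [:- l, 1:])"
proof -
  have "upper_triangular (diag_of_list ls)"
    by (auto simp: upper_triangular_def diag_of_list_def)
  then have "char_poly (diag_of_list ls) = (\<Prod>l\<leftarrow>diag_mat (diag_of_list ls). [:- l, 1:])"
    by (rule char_poly_upper_triangular[OF diag_of_list_carrier])
  also have "diag_mat (diag_of_list ls) = ls"
    by (intro nth_equalityI) (auto simp: diag_mat_def diag_of_list_def)
  finally show ?thesis .
qed

lemma symmetric_mat_eigen_expansion:
  fixes A :: "real mat"
  assumes A: "A \<in> carrier_mat n n" and sym: "A\<^sup>T = A"
  obtains P ls where "length ls = n" "char_poly A = (\<Prod>l\<leftarrow>ls. [:- l, 1:])"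
    "orthogonal_diagonalization n (\<lambda>i j. P $$ (i, j)) (\<lambda>i k. A $$ (i, k)) (\<lambda>j. ls ! j)"
proof -
  obtain P ls where P: "P \<in> carrier_mat n n" "P\<^sup>T * P = 1\<^sub>m n" and len: "length ls = n"
    and AP: "A = P * diag_of_list ls * P\<^sup>T"
    using symmetric_mat_orthogonal_diagonalization[OF A sym] by metis
  have PT: "P\<^sup>T \<in> carrier_mat n n" using P by simp
  have PPT: "P * P\<^sup>T = 1\<^sub>m n"
    using mat_mult_left_right_inverse[OF PT P(1) P(2)] .
  have D: "diag_of_list ls \<in> carrier_mat n n" using len by (metis diag_of_list_carrier)
  have "similar_mat A (diag_of_list ls)"
    unfolding similar_mat_def using similar_mat_witI[OF PPT P(2) AP A D P(1) PT] by blast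
  then have cp: "char_poly A = (\<Prod>l\<leftarrow>ls. [:- l, 1:])"
    by (simp add: char_poly_similar char_poly_diag_of_list)
  have "orthogonal_diagonalization n (\<lambda>i j. P $$ (i, j)) (\<lambda>i k. A $$ (i, k)) (\<lambda>j. ls ! j)"
  proof
    fix i k assume ik: "i < n" "k < n"
    have "(P\<^sup>T * P) $$ (i, k) = (\<Sum>j=0..<n. P $$ (j, i) * P $$ (j, k))"
      using index_mult_mat_sum[OF PT P(1) ik] P(1) ik by (auto intro!: sum.cong)
    then show "(\<Sum>j=0..<n. P $$ (j, i) * P $$ (j, k)) = (if i = k then 1 else 0)"
      using P(2) ik by simp
    have "(P * P\<^sup>T) $$ (i, k) = (\<Sum>j=0..<n. P $$ (i, j) * P $$ (k, j))"
      using index_mult_mat_sum[OF P(1) PT ik] P(1) ik by (auto intro!: sum.cong)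
    then show "(\<Sum>j=0..<n. P $$ (i, j) * P $$ (k, j)) = (if i = k then 1 else 0)"
      using PPT ik by simp
    have "(P * diag_of_list ls * P\<^sup>T) $$ (i, k) = (\<Sum>j=0..<n. (P * diag_of_list ls) $$ (i, j) * P\<^sup>T $$ (j, k))"
      using P(1) D PT ik by (intro index_mult_mat_sum) auto
    also have "\<dots> = (\<Sum>j=0..<n. P $$ (i, j) * ls ! j * P $$ (k, j))"
      using P(1) ik by (intro sum.cong) (auto simp: index_mult_diag_of_list[OF P(1) len] simp del: index_mult_mat)
    finally show "A $$ (i, k) = (\<Sum>j=0..<n. P $$ (i, j) * ls ! j * P $$ (k, j))"
      using AP by simp
  qed
  then show ?thesis using that len cp by blast
qed

section \<open>The second smallest eigenvalue\<close>

lemma order_prod_linear_factors: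
  fixes a :: real
  shows "order a (\<Prod>l\<leftarrow>ls. [:- l, 1:]) = count_list ls a"
proof (induction ls)
  case Nil
  then show ?case by (simp add: order_0I)
next
  case (Cons l ls)
  have "(\<Prod>l\<leftarrow>ls. [:- l, 1:]) \<noteq> (0 :: real poly)"
    by (auto simp: prod_list_zero_iff)
  then have "[:- l, 1:] * (\<Prod>l\<leftarrow>ls. [:- l, 1:]) \<noteq> (0 :: real poly)"
    by (intro no_zero_divisors) simp_all
  then have "order a ([:- l, 1:] * (\<Prod>l\<leftarrow>ls. [:- l, 1:])) = order a [:- l, 1:] + order a (\<Prod>l\<leftarrow>ls. [:- l, 1:])"
    by (rule order_mult)
  then show ?case using Cons by (simp add: order_linear')
qed

lemma count_list_filter: "P x \<Longrightarrow> count_list (filter P xs) x = count_list xs x"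
  by (induction xs) auto

context
  fixes A :: "real mat" and n :: nat and ls :: "real list"
  assumes A: "A \<in> carrier_mat n n" and char_poly_A: "char_poly A = (\<Prod>l\<leftarrow>ls. [:- l, 1:])"
    and length_ls: "length ls = n"
begin

lemma eigenvalue_iff_mem: "eigenvalue A mu \<longleftrightarrow> mu \<in> set ls"
  unfolding eigenvalue_root_char_poly[OF A] char_poly_A
  by (auto simp: poly_prod_list prod_list_zero_iff image_iff)

lemma sum_order_eigenvalues_le:
  "(\<Sum>nu\<in>{nu. eigenvalue A nu \<and> nu \<le> mu}. order nu (char_poly A)) = card {j\<in>{0..<n}. ls ! j \<le> mu}"
proof -
  have "(\<Sum>nu\<in>{nu. eigenvalue A nu \<and> nu \<le> mu}. order nu (char_poly A))
      = (\<Sum>nu\<in>{nu \<in> set ls. nu \<le> mu}. count_list (filter (\<lambda>l. l \<le> mu) ls) nu)"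
    unfolding char_poly_A order_prod_linear_factors eigenvalue_iff_mem
    by (intro sum.cong) (auto simp: count_list_filter)
  also have "\<dots> = length (filter (\<lambda>l. l \<le> mu) ls)"
    by (rule sum_count_set) auto
  also have "\<dots> = card {j\<in>{0..<n}. ls ! j \<le> mu}"
    unfolding length_filter_conv_card length_ls by (rule arg_cong[where f = card]) auto
  finally show ?thesis .
qed

lemma second_smallest_eigenvalue_eq_Least:
  "second_smallest_eigenvalue A = (LEAST mu. mu \<in> set ls \<and> 2 \<le> card {j\<in>{0..<n}. ls ! j \<le> mu})"
  unfolding second_smallest_eigenvalue_def sum_order_eigenvalues_le unfolding eigenvalue_iff_mem ..

lemma second_smallest_eigenvalue_le:
  assumes "mu \<in> set ls" "2 \<le> card {j\<in>{0..<n}. ls ! j \<le> mu}"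
  shows "second_smallest_eigenvalue A \<le> mu"
  unfolding second_smallest_eigenvalue_eq_Least using assms
  by (subst Least_Min) (auto intro: Min_le)

lemma second_smallest_eigenvalue_less:
  assumes "2 \<le> card {j\<in>{0..<n}. ls ! j < c}"
  shows "second_smallest_eigenvalue A < c"
proof -
  let ?T = "{l \<in> set ls. l < c}"
  have "{j\<in>{0..<n}. ls ! j < c} \<noteq> {}" using assms by (metis card.empty not_numeral_le_zero)
  then obtain j where "j < n" "ls ! j < c" by auto
  then have "?T \<noteq> {}" using length_ls nth_mem by blast
  then have mu: "Max ?T \<in> ?T" by (intro Max_in) auto
  have "{j\<in>{0..<n}. ls ! j < c} \<subseteq> {j\<in>{0..<n}. ls ! j \<le> Max ?T}"
  proof
    fix j assume "j \<in> {j\<in>{0..<n}. ls ! j < c}"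
    then have "ls ! j \<in> ?T" using length_ls by auto
    then show "j \<in> {j\<in>{0..<n}. ls ! j \<le> Max ?T}"
      using \<open>j \<in> _\<close> by (auto intro: Max_ge)
  qed
  then have "card {j\<in>{0..<n}. ls ! j < c} \<le> card {j\<in>{0..<n}. ls ! j \<le> Max ?T}"
    by (intro card_mono) auto
  then have "2 \<le> card {j\<in>{0..<n}. ls ! j \<le> Max ?T}" using assms by linarith
  then have "second_smallest_eigenvalue A \<le> Max ?T"
    using mu by (intro second_smallest_eigenvalue_le) auto
  then show ?thesis using mu by simp
qed

lemma second_smallest_eigenvalue_eqI:
  assumes le: "2 \<le> card {j\<in>{0..<n}. ls ! j \<le> c}" and less: "card {j\<in>{0..<n}. ls ! j < c} \<le> 1"
  shows "second_smallest_eigenvalue A = c"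
  unfolding second_smallest_eigenvalue_eq_Least
proof (rule Least_equality)
  have "{j\<in>{0..<n}. ls ! j \<le> c} \<noteq> {j\<in>{0..<n}. ls ! j < c}"
    using le less by (metis (no_types, lifting) numeral_le_one_iff order.trans semiring_norm(69))
  moreover have "{j\<in>{0..<n}. ls ! j < c} \<subseteq> {j\<in>{0..<n}. ls ! j \<le> c}" by auto
  ultimately obtain j where "j \<in> {j\<in>{0..<n}. ls ! j \<le> c} - {j\<in>{0..<n}. ls ! j < c}"
    using psubset_imp_ex_mem by blast
  then have "ls ! j \<in> set ls" "ls ! j = c" using length_ls by auto
  then show "c \<in> set ls \<and> 2 \<le> card {j\<in>{0..<n}. ls ! j \<le> c}" using le by simp
next
  fix mu assume mu: "mu \<in> set ls \<and> 2 \<le> card {j\<in>{0..<n}. ls ! j \<le> mu}"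
  show "c \<le> mu"
  proof (rule ccontr)
    assume "\<not> c \<le> mu"
    then have "{j\<in>{0..<n}. ls ! j \<le> mu} \<subseteq> {j\<in>{0..<n}. ls ! j < c}" by auto
    then have "card {j\<in>{0..<n}. ls ! j \<le> mu} \<le> card {j\<in>{0..<n}. ls ! j < c}"
      by (intro card_mono) simp_all
    then show False using mu less by simp
  qed
qed

end

section \<open>Separators and vertex connectivity\<close>

lemma simple_graph_sym: "simple_graph n E \<Longrightarrow> E i j \<Longrightarrow> E j i"
  unfolding simple_graph_def by blast

lemma simple_graph_irrefl: "simple_graph n E \<Longrightarrow> \<not> E i i"
  unfolding simple_graph_def by blast

lemma induced_rel_rtrancl_edge: "a \<in> W \<Longrightarrow> b \<in> W \<Longrightarrow> E a b \<Longrightarrow> (a, b) \<in> (induced_rel E W)\<^sup>*"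
  unfolding induced_rel_def by auto

lemma uv_separator_disconnects:
  "uv_separator n E S u v \<Longrightarrow> S \<subseteq> verts n \<and> \<not> connected_on E (verts n - S)"
  unfolding uv_separator_def connected_on_def by auto

lemma minimal_vertex_separator_disconnects:
  "minimal_vertex_separator n E S \<Longrightarrow> S \<subseteq> verts n \<and> \<not> connected_on E (verts n - S)"
  unfolding minimal_vertex_separator_def minimal_uv_separator_def by (auto dest: uv_separator_disconnects)

lemma connected_on_if_universal_notin:
  assumes sg: "simple_graph n E" and x: "universal n E x" "x \<notin> T"
  shows "connected_on E (verts n - T)"
  unfolding connected_on_def
proof (intro ballI)
  fix a b assume a: "a \<in> verts n - T" and b: "b \<in> verts n - T"
  have xW: "x \<in> verts n - T" using x unfolding universal_def by auto
  have "(a, x) \<in> (induced_rel E (verts n - T))\<^sup>*"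
    using x a xW simple_graph_sym[OF sg] unfolding universal_def
    by (cases "a = x") (auto intro: induced_rel_rtrancl_edge)
  moreover have "(x, b) \<in> (induced_rel E (verts n - T))\<^sup>*"
    using x b xW unfolding universal_def by (cases "b = x") (auto intro: induced_rel_rtrancl_edge)
  ultimately show "(a, b) \<in> (induced_rel E (verts n - T))\<^sup>*" by (rule rtrancl_trans)
qed

lemma universal_mem_disconnecting_set:
  "simple_graph n E \<Longrightarrow> universal n E x \<Longrightarrow> \<not> connected_on E (verts n - T) \<Longrightarrow> x \<in> T"
  using connected_on_if_universal_notin by blast

lemma finite_vertex_set: "S \<subseteq> verts n \<Longrightarrow> finite S"
  unfolding verts_def using finite_subset by blast

lemma vertex_connectivity_eqI:
  assumes "S \<subseteq> verts n" "\<not> connected_on E (verts n - S)"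
    and "\<And>T. T \<subseteq> verts n \<Longrightarrow> \<not> connected_on E (verts n - T) \<Longrightarrow> card S \<le> card T"
  shows "vertex_connectivity n E = card S"
  unfolding vertex_connectivity_def
proof (rule Min_eqI)
  have "{card S |S. S \<subseteq> verts n \<and> \<not> connected_on E (verts n - S)} \<subseteq> card ` Pow (verts n)" by auto
  then show "finite {card S |S. S \<subseteq> verts n \<and> \<not> connected_on E (verts n - S)}"
    by (rule finite_subset) (simp add: verts_def)
qed (use assms in auto)

lemma not_connected_on_nonadjacent_pair:
  assumes sg: "simple_graph n E" and ij: "i \<noteq> j" "\<not> E i j"
  shows "\<not> connected_on E {i, j}"
proof
  assume "connected_on E {i, j}"
  then have "(i, j) \<in> (induced_rel E {i, j})\<^sup>*" unfolding connected_on_def by auto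
  moreover have "z = i" if "(i, z) \<in> (induced_rel E {i, j})\<^sup>*" for z
    using that
  proof (induction rule: rtrancl_induct)
    case (step y z)
    then show ?case using ij simple_graph_irrefl[OF sg] by (auto simp: induced_rel_def)
  qed simp
  ultimately show False using ij by auto
qed

lemma vertex_connectivity_attained:
  assumes sg: "simple_graph n E" and nc: "\<not> complete_graph n E"
  obtains S where "S \<subseteq> verts n" "\<not> connected_on E (verts n - S)" "vertex_connectivity n E = card S"
    "\<And>T. T \<subseteq> verts n \<Longrightarrow> \<not> connected_on E (verts n - T) \<Longrightarrow> card S \<le> card T"
proof -
  let ?M = "{S. S \<subseteq> verts n \<and> \<not> connected_on E (verts n - S)}"
  obtain i j where ij: "i \<in> verts n" "j \<in> verts n" "i \<noteq> j" "\<not> E i j"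
    using nc unfolding complete_graph_def by blast
  then have "verts n - {i, j} \<in> ?M"
    using not_connected_on_nonadjacent_pair[OF sg, of i j] by (simp add: Diff_Diff_Int Int_absorb1)
  then have "card ` ?M \<noteq> {}" by blast
  moreover have "finite (card ` ?M)" by (rule finite_imageI, rule finite_subset[of _ "Pow (verts n)"]) (auto simp: verts_def)
  ultimately have "Min (card ` ?M) \<in> card ` ?M" by (rule Min_in[rotated])
  then obtain S where S: "S \<in> ?M" "card S = Min (card ` ?M)" by auto
  have min: "card S \<le> card T" if "T \<subseteq> verts n" "\<not> connected_on E (verts n - T)" for T
    using S(2) Min_le[OF \<open>finite (card ` ?M)\<close>] that by simp
  show ?thesis
  proof (rule that)
    show "vertex_connectivity n E = card S"
      using S(1) min by (intro vertex_connectivity_eqI) auto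
  qed (use S(1) min in auto)
qed

lemma chordal_joined_set_is_clique:
  assumes sg: "simple_graph n E" and ch: "chordal n E" and S: "S \<subseteq> verts n"
    and u: "u \<in> verts n - S" and v: "v \<in> verts n - S" and uv: "u \<noteq> v" "\<not> E u v"
    and join: "\<forall>w\<in>verts n - S. \<forall>s\<in>S. E w s"
    and x: "x \<in> S" and y: "y \<in> S" and xy: "x \<noteq> y"
  shows "E x y"
proof (rule ccontr)
  assume nxy: "\<not> E x y"
  define cs where "cs = [x, u, y, v]"
  have "E u x" "E u y" "E v x" "E v y" using join u v x y by auto
  then have "\<forall>i < length cs. E (cs ! i) (cs ! ((i + 1) mod length cs))"
    using simple_graph_sym[OF sg] by (auto simp: cs_def less_Suc_eq)
  moreover have len: "length cs = 4" and "distinct cs" "set cs \<subseteq> verts n"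
    using u v x y xy uv S by (auto simp: cs_def)
  ultimately obtain i j where ij: "i < length cs" "j < length cs" "i \<noteq> j"
    "j \<noteq> (i + 1) mod length cs" "i \<noteq> (j + 1) mod length cs" "E (cs ! i) (cs ! j)"
    using ch unfolding chordal_def by (metis order_refl)
  moreover have "i \<in> {0, 1, 2, 3}" "j \<in> {0, 1, 2, 3}" using ij len by auto
  ultimately show False
    using nxy uv simple_graph_sym[OF sg] by (auto simp: cs_def)
qed

section \<open>The Laplacian quadratic form\<close>

text \<open>Summed over ordered pairs, so every edge counts twice: the Laplacian quadratic form is
  half of it.\<close>
definition edge_energy :: "nat \<Rightarrow> (nat \<Rightarrow> nat \<Rightarrow> bool) \<Rightarrow> (nat \<Rightarrow> real) \<Rightarrow> real" where
  "edge_energy n E y = (\<Sum>i=0..<n. \<Sum>k=0..<n. if E i k then (y i - y k)^2 else 0)"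

lemma laplacian_carrier: "laplacian n E \<in> carrier_mat n n"
  by (simp add: laplacian_def)

lemma index_laplacian: "i < n \<Longrightarrow> k < n \<Longrightarrow> laplacian n E $$ (i,k) =
   (if i = k then real (card {k. k < n \<and> E i k}) else 0) - (if E i k then 1 else 0)"
  by (simp add: laplacian_def)

lemma laplacian_transpose: "simple_graph n E \<Longrightarrow> (laplacian n E)\<^sup>T = laplacian n E"
  by (rule eq_matI) (auto simp: laplacian_def dest: simple_graph_sym)

lemma degree_eq_sum:
  fixes E :: "nat \<Rightarrow> nat \<Rightarrow> bool"
  shows "real (card {k. k < n \<and> E i k}) = (\<Sum>k=0..<n. if E i k then 1 else 0)"
proof -
  have "{k. k < n \<and> E i k} = {k\<in>{0..<n}. E i k}" by auto
  hence "real (card {k. k < n \<and> E i k}) = (\<Sum>k\<in>{k\<in>{0..<n}. E i k}. 1)" by simp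
  also have "\<dots> = (\<Sum>k=0..<n. if E i k then 1 else 0)" by (rule sum.inter_filter) simp
  finally show ?thesis .
qed

lemma sum_edges_swap:
  assumes sg: "simple_graph n E"
  shows "(\<Sum>i=0..<n. \<Sum>k=0..<n. if E i k then f k i else (0::real)) = (\<Sum>i=0..<n. \<Sum>k=0..<n. if E i k then f i k else 0)"
proof -
  have "(\<Sum>i=0..<n. \<Sum>k=0..<n. if E i k then f k i else (0::real)) = (\<Sum>k=0..<n. \<Sum>i=0..<n. if E i k then f k i else 0)"
    by (rule sum.swap)
  also have "\<dots> = (\<Sum>k=0..<n. \<Sum>i=0..<n. if E k i then f k i else 0)"
  proof -
    have "E a b = E b a" for a b using simple_graph_sym[OF sg] by blast
    thus ?thesis by simp
  qed
  finally show ?thesis .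
qed

lemma laplacian_quad_form:
  assumes sg: "simple_graph n E"
  shows "quad_form n (\<lambda>i k. laplacian n E $$ (i,k)) y = edge_energy n E y / 2"
proof -
  define D where "D = (\<Sum>i=0..<n. \<Sum>k=0..<n. if E i k then y i * y i else 0)"
  define X where "X = (\<Sum>i=0..<n. \<Sum>k=0..<n. if E i k then y i * y k else 0)"
  have "quad_form n (\<lambda>i k. laplacian n E $$ (i,k)) y =
      (\<Sum>i=0..<n. \<Sum>k=0..<n. (if i = k then y i * y i * real (card {k. k < n \<and> E i k}) else 0)
         - (if E i k then y i * y k else 0))"
    unfolding quad_form_def by (intro sum.cong refl) (auto simp: index_laplacian simple_graph_irrefl[OF sg] algebra_simps)
  also have "\<dots> = (\<Sum>i=0..<n. y i * y i * real (card {k. k < n \<and> E i k})) - X"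
    unfolding X_def by (simp add: sum_subtractf)
  also have "(\<Sum>i=0..<n. y i * y i * real (card {k. k < n \<and> E i k})) = D"
    unfolding D_def degree_eq_sum by (simp add: sum_distrib_left if_distrib cong: if_cong)
  finally have q: "quad_form n (\<lambda>i k. laplacian n E $$ (i,k)) y = D - X" .
  have "edge_energy n E y = (\<Sum>i=0..<n. \<Sum>k=0..<n. (if E i k then y i * y i else 0) + (if E i k then y k * y k else 0)
       - 2 * (if E i k then y i * y k else 0))"
    unfolding edge_energy_def by (intro sum.cong refl) (auto simp: power2_eq_square algebra_simps)
  also have "\<dots> = D + (\<Sum>i=0..<n. \<Sum>k=0..<n. if E i k then y k * y k else 0) - 2 * X"
    unfolding D_def X_def by (simp add: sum.distrib sum_subtractf sum_distrib_left)
  also have "(\<Sum>i=0..<n. \<Sum>k=0..<n. if E i k then y k * y k else 0) = D"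
    unfolding D_def by (rule sum_edges_swap[OF sg, of "\<lambda>a b. y a * y a"])
  finally have "edge_energy n E y = 2 * D - 2 * X" by simp
  thus ?thesis using q by simp
qed

lemma edge_energy_affine: "edge_energy n E (\<lambda>i. al + be * x i) = be^2 * edge_energy n E x"
  unfolding edge_energy_def by (simp add: sum_distrib_left power2_eq_square algebra_simps if_distrib cong: if_cong)

lemma sq_norm_affine: "sq_norm n (\<lambda>i. al + be * x i) = al^2 * n + be^2 * sq_norm n x + 2 * al * be * (\<Sum>i=0..<n. x i)"
  unfolding sq_norm_def by (simp add: sum.distrib sum_distrib_left power2_eq_square algebra_simps)

lemma edge_energy_locally_constant:
  assumes sg: "simple_graph n E" and S: "S \<subseteq> verts n" and x0: "\<And>i. i \<in> S \<Longrightarrow> x i = 0"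
    and xc: "\<And>i k. i < n \<Longrightarrow> k < n \<Longrightarrow> i \<notin> S \<Longrightarrow> k \<notin> S \<Longrightarrow> E i k \<Longrightarrow> x i = x k"
  shows "edge_energy n E x = 2 * (\<Sum>i=0..<n. if i \<notin> S then (x i)^2 * real (card {k\<in>S. E i k}) else 0)"
proof -
  define F where "F = (\<Sum>i=0..<n. \<Sum>k=0..<n. if E i k then (if i \<notin> S \<and> k \<in> S then (x i)^2 else 0) else 0)"
  have "edge_energy n E x = (\<Sum>i=0..<n. \<Sum>k=0..<n. (if E i k then (if i \<notin> S \<and> k \<in> S then (x i)^2 else 0) else 0)
        + (if E i k then (if k \<notin> S \<and> i \<in> S then (x k)^2 else 0) else 0))"
    unfolding edge_energy_def
  proof (intro sum.cong refl)
    fix i k assume i: "i \<in> {0..<n}" and k: "k \<in> {0..<n}"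
    show "(if E i k then (x i - x k)\<^sup>2 else 0) = (if E i k then (if i \<notin> S \<and> k \<in> S then (x i)^2 else 0) else 0)
        + (if E i k then (if k \<notin> S \<and> i \<in> S then (x k)^2 else 0) else 0)"
      using i k x0[of i] x0[of k] xc[of i k] by (cases "i \<in> S"; cases "k \<in> S") auto
  qed
  also have "\<dots> = F + (\<Sum>i=0..<n. \<Sum>k=0..<n. if E i k then (if k \<notin> S \<and> i \<in> S then (x k)^2 else 0) else 0)"
    unfolding F_def by (simp add: sum.distrib)
  also have "(\<Sum>i=0..<n. \<Sum>k=0..<n. if E i k then (if k \<notin> S \<and> i \<in> S then (x k)^2 else 0) else 0) = F"
    unfolding F_def by (rule sum_edges_swap[OF sg, of "\<lambda>a b. if a \<notin> S \<and> b \<in> S then (x a)^2 else 0"])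
  also have "F = (\<Sum>i=0..<n. if i \<notin> S then (x i)^2 * real (card {k\<in>S. E i k}) else 0)"
    unfolding F_def
  proof (intro sum.cong refl)
    fix i assume i: "i \<in> {0..<n}"
    have setq: "{k\<in>S. E i k} = {k\<in>{0..<n}. k \<in> S \<and> E i k}" using S by (auto simp: verts_def)
    have "real (card {k\<in>S. E i k}) = (\<Sum>k\<in>{k\<in>{0..<n}. k \<in> S \<and> E i k}. 1)" unfolding setq by simp
    also have "\<dots> = (\<Sum>k=0..<n. if k \<in> S \<and> E i k then 1 else 0)" by (rule sum.inter_filter) simp
    finally have c: "real (card {k\<in>S. E i k}) = (\<Sum>k=0..<n. if k \<in> S \<and> E i k then 1 else 0)" .
    show "(\<Sum>k=0..<n. if E i k then (if i \<notin> S \<and> k \<in> S then (x i)^2 else 0) else 0)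
       = (if i \<notin> S then (x i)^2 * real (card {k\<in>S. E i k}) else 0)"
    proof (cases "i \<in> S")
      case True thus ?thesis by (intro trans[OF sum.neutral]) auto
    next
      case False thus ?thesis unfolding c by (auto simp: sum_distrib_left intro!: sum.cong)
    qed
  qed
  finally show ?thesis by simp
qed

lemma sum_sum_square_diff:
  fixes y :: "nat \<Rightarrow> real"
  assumes "finite A"
  shows "(\<Sum>i\<in>A. \<Sum>k\<in>A. (y i - y k)^2) = 2 * card A * (\<Sum>i\<in>A. y i * y i) - 2 * (\<Sum>i\<in>A. y i)^2"
proof -
  have "(\<Sum>i\<in>A. \<Sum>k\<in>A. (y i - y k)^2) = (\<Sum>i\<in>A. \<Sum>k\<in>A. y i * y i + y k * y k - 2 * (y i * y k))"
    by (intro sum.cong refl) (simp add: power2_eq_square algebra_simps)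
  also have "\<dots> = 2 * card A * (\<Sum>i\<in>A. y i * y i) - 2 * (\<Sum>i\<in>A. y i) * (\<Sum>k\<in>A. y k)"
    by (simp add: sum.distrib sum_subtractf sum_distrib_left sum_distrib_right sum.swap[of "\<lambda>i k. y k * y k"] algebra_simps)
  finally show ?thesis by (simp add: power2_eq_square)
qed

lemma universal_edge_term_ge:
  fixes y :: "nat \<Rightarrow> real"
  assumes sg: "simple_graph n E" and univ: "\<And>u. u \<in> U \<Longrightarrow> universal n E u" and ik: "i < n" "k < n"
  shows "(y i - y k)\<^sup>2 - (if i \<notin> U \<and> k \<notin> U then (y i - y k)\<^sup>2 else 0)
    \<le> (if E i k then (y i - y k)\<^sup>2 else 0)"
proof (cases "i \<notin> U \<and> k \<notin> U \<or> i = k")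
  case False
  then have "E i k \<or> E k i" using univ ik by (auto simp: universal_def verts_def)
  then have "E i k" using simple_graph_sym[OF sg] by blast
  then show ?thesis using False by simp
qed auto

lemma sum_sum_square_diff_le:
  fixes y :: "nat \<Rightarrow> real"
  assumes "finite A" "W \<subseteq> A"
  shows "(\<Sum>i\<in>W. \<Sum>k\<in>W. (y i - y k)\<^sup>2) \<le> 2 * card W * (\<Sum>i\<in>A. y i * y i)"
proof -
  have "(\<Sum>i\<in>W. \<Sum>k\<in>W. (y i - y k)\<^sup>2) \<le> 2 * card W * (\<Sum>i\<in>W. y i * y i)"
    using sum_sum_square_diff[OF finite_subset[OF assms(2,1)], of y] by simp
  also have "\<dots> \<le> 2 * card W * (\<Sum>i\<in>A. y i * y i)"
    using assms by (intro mult_left_mono sum_mono2) auto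
  finally show ?thesis .
qed

text \<open>Every non-edge joins two vertices of W = V - U, so the energy is at least that of the
  complete graph on V minus that of the complete graph on W; for y summing to zero these are
  2 n |y|^2 and at most 2 |W| |y|^2.\<close>
lemma edge_energy_ge_universal:
  assumes sg: "simple_graph n E" and U: "U \<subseteq> verts n" and univ: "\<And>u. u \<in> U \<Longrightarrow> universal n E u"
    and sum0: "(\<Sum>i=0..<n. y i) = 0"
  shows "edge_energy n E y \<ge> 2 * real (card U) * sq_norm n y"
proof -
  define W where "W = {0..<n} - U"
  have U': "U \<subseteq> {0..<n}" using U by (simp add: verts_def)
  have "(\<Sum>i=0..<n. \<Sum>k=0..<n. if i \<notin> U \<and> k \<notin> U then (y i - y k)\<^sup>2 else 0)
      = (\<Sum>i=0..<n. if i \<in> W then (\<Sum>k=0..<n. if k \<in> W then (y i - y k)\<^sup>2 else 0) else 0)"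
    by (intro sum.cong) (auto simp: W_def)
  also have "\<dots> = (\<Sum>i\<in>W. \<Sum>k\<in>W. (y i - y k)\<^sup>2)"
    using Diff_subset[of "{0..<n}" U, folded W_def]
    by (simp add: sum.inter_restrict[symmetric] Int_absorb1 Int_absorb2)
  moreover have "(\<Sum>i=0..<n. \<Sum>k=0..<n. (y i - y k)\<^sup>2 - (if i \<notin> U \<and> k \<notin> U then (y i - y k)\<^sup>2 else 0))
      \<le> edge_energy n E y"
    unfolding edge_energy_def by (intro sum_mono) (use universal_edge_term_ge[OF sg univ] in auto)
  ultimately have "(\<Sum>i=0..<n. \<Sum>k=0..<n. (y i - y k)\<^sup>2) - (\<Sum>i\<in>W. \<Sum>k\<in>W. (y i - y k)\<^sup>2) \<le> edge_energy n E y"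
    by (simp add: sum_subtractf)
  moreover have "(\<Sum>i=0..<n. \<Sum>k=0..<n. (y i - y k)\<^sup>2) = 2 * n * sq_norm n y"
    using sum_sum_square_diff[of "{0..<n}" y] sum0 by (simp add: sq_norm_def)
  moreover have "(\<Sum>i\<in>W. \<Sum>k\<in>W. (y i - y k)\<^sup>2) \<le> 2 * card W * sq_norm n y"
    unfolding sq_norm_def by (rule sum_sum_square_diff_le) (auto simp: W_def)
  moreover have "card W = n - card U" using U' by (simp add: W_def card_Diff_subset finite_subset)
  moreover have "card U \<le> n" using card_mono[OF _ U'] by simp
  ultimately show ?thesis by (simp add: of_nat_diff algebra_simps)
qed

lemma disconnected_split:
  assumes sg: "simple_graph n E" and nc: "\<not> connected_on E W"
  obtains C where "C \<subseteq> W" "C \<noteq> {}" "W - C \<noteq> {}"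
    "\<And>i k. i \<in> W \<Longrightarrow> k \<in> W \<Longrightarrow> E i k \<Longrightarrow> i \<in> C \<longleftrightarrow> k \<in> C"
proof -
  let ?R = "induced_rel E W"
  obtain u v where uv: "u \<in> W" "v \<in> W" "(u, v) \<notin> ?R\<^sup>*"
    using nc unfolding connected_on_def by blast
  define C where "C = {z \<in> W. (u, z) \<in> ?R\<^sup>*}"
  have "i \<in> C \<longleftrightarrow> k \<in> C" if "i \<in> W" "k \<in> W" "E i k" for i k
  proof -
    have "(i, k) \<in> ?R" "(k, i) \<in> ?R"
      using that simple_graph_sym[OF sg] by (auto simp: induced_rel_def)
    then show ?thesis using that by (auto simp: C_def intro: rtrancl_into_rtrancl)
  qed
  moreover have "u \<in> C" "v \<in> W - C" using uv by (auto simp: C_def)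
  ultimately show ?thesis using that[of C] by (auto simp: C_def)
qed

lemma component_test_vector:
  assumes sg: "simple_graph n E" and S: "S \<subseteq> verts n" and nc: "\<not> connected_on E (verts n - S)"
  obtains x :: "nat \<Rightarrow> real" where "\<And>i. i \<in> S \<Longrightarrow> x i = 0"
    "\<And>i k. i < n \<Longrightarrow> k < n \<Longrightarrow> i \<notin> S \<Longrightarrow> k \<notin> S \<Longrightarrow> E i k \<Longrightarrow> x i = x k"
    "(\<Sum>i=0..<n. x i) = 0" "\<And>i. i < n \<Longrightarrow> i \<notin> S \<Longrightarrow> x i \<noteq> 0"
proof -
  define W where "W = verts n - S"
  obtain C where C: "C \<subseteq> W" "C \<noteq> {}" "W - C \<noteq> {}"
    and closed: "\<And>i k. i \<in> W \<Longrightarrow> k \<in> W \<Longrightarrow> E i k \<Longrightarrow> i \<in> C \<longleftrightarrow> k \<in> C"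
    using disconnected_split[OF sg nc] unfolding W_def by metis
  have W: "W \<subseteq> {0..<n}" "finite W" by (auto simp: W_def verts_def)
  define c1 where "c1 = real (card C)"
  define c2 where "c2 = real (card (W - C))"
  have "c1 > 0" "c2 > 0"
    using C W by (auto simp: c1_def c2_def card_gt_0_iff intro: finite_subset)
  define x where "x i = (if i \<in> C then c2 else if i \<in> W then - c1 else 0)" for i
  show ?thesis
  proof (rule that[of x])
    show "x i = 0" if "i \<in> S" for i using that C by (auto simp: x_def W_def)
    show "x i = x k" if "i < n" "k < n" "i \<notin> S" "k \<notin> S" "E i k" for i k
      using that closed[of i k] by (auto simp: x_def W_def verts_def)
    show "x i \<noteq> 0" if "i < n" "i \<notin> S" for i
      using that \<open>c1 > 0\<close> \<open>c2 > 0\<close> by (auto simp: x_def W_def verts_def)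
    have indicator_sum: "(\<Sum>i=0..<n. if i \<in> B then c else 0) = real (card B) * c"
      if "B \<subseteq> {0..<n}" for B and c :: real
      using that by (simp add: sum.inter_restrict[symmetric] Int_absorb1 Int_absorb2)
    have "x i = (if i \<in> C then c2 else 0) + (if i \<in> W - C then - c1 else 0)" for i
      using C by (auto simp: x_def)
    moreover have "C \<subseteq> {0..<n}" "W - C \<subseteq> {0..<n}" using C W by auto
    ultimately have "(\<Sum>i=0..<n. x i) = real (card C) * c2 + real (card (W - C)) * (- c1)"
      using indicator_sum[of C c2] indicator_sum[of "W - C" "- c1"] by (simp add: sum.distrib)
    then show "(\<Sum>i=0..<n. x i) = 0" by (simp add: c1_def c2_def)
  qed
qed

section \<open>Algebraic connectivity\<close>

lemma laplacian_eigen_expansion: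
  assumes "simple_graph n E"
  obtains P ls where "length ls = n" "char_poly (laplacian n E) = (\<Prod>l\<leftarrow>ls. [:- l, 1:])"
    "orthogonal_diagonalization n (\<lambda>i j. P $$ (i, j)) (\<lambda>i k. laplacian n E $$ (i, k)) (\<lambda>j. ls ! j)"
  using symmetric_mat_eigen_expansion[OF laplacian_carrier laplacian_transpose[OF assms]] by blast

lemma sq_norm_pos_imp_dim_pos: "sq_norm n x > 0 \<Longrightarrow> n > 0"
  by (cases n) (simp_all add: sq_norm_def)

lemma algebraic_connectivity_less:
  assumes sg: "simple_graph n E" and k: "k > 0"
    and x: "(\<Sum>i=0..<n. x i) = 0" "sq_norm n x > 0" "edge_energy n E x < 2 * k * sq_norm n x"
  shows "algebraic_connectivity n E < k"
proof -
  obtain P ls where len: "length ls = n" and cp: "char_poly (laplacian n E) = (\<Prod>l\<leftarrow>ls. [:- l, 1:])"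
    and od: "orthogonal_diagonalization n (\<lambda>i j. P $$ (i, j)) (\<lambda>i k. laplacian n E $$ (i, k)) (\<lambda>j. ls ! j)"
    using laplacian_eigen_expansion[OF sg] by blast
  interpret orthogonal_diagonalization n "\<lambda>i j. P $$ (i, j)" "\<lambda>i k. laplacian n E $$ (i, k)" "\<lambda>j. ls ! j"
    by (rule od)
  have n: "real n > 0" using sq_norm_pos_imp_dim_pos[OF x(2)] by simp
  have "2 \<le> card {j\<in>{0..<n}. ls ! j < k}"
  proof (rule two_eigenvalues_less[of "\<lambda>_. 1" x])
    fix al be :: real assume ab: "(al, be) \<noteq> (0, 0)"
    have "be\<^sup>2 * (edge_energy n E x / 2) < k * (al\<^sup>2 * n + be\<^sup>2 * sq_norm n x)"
    proof (cases "be = 0")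
      case True
      then show ?thesis using ab k n by simp
    next
      case False
      then have "be\<^sup>2 * (edge_energy n E x / 2) < be\<^sup>2 * (k * sq_norm n x)" using x(3) by simp
      moreover have "k * (al\<^sup>2 * n) \<ge> 0" using k by simp
      ultimately show ?thesis by (simp add: algebra_simps)
    qed
    then show "quad_form n (\<lambda>i k. laplacian n E $$ (i, k)) (\<lambda>i. al * 1 + be * x i)
        < k * sq_norm n (\<lambda>i. al * 1 + be * x i)"
      by (simp add: laplacian_quad_form[OF sg] edge_energy_affine sq_norm_affine x(1))
  qed
  then show ?thesis
    unfolding algebraic_connectivity_def by (rule second_smallest_eigenvalue_less[OF laplacian_carrier cp len])
qed

lemma algebraic_connectivity_eqI:
  assumes sg: "simple_graph n E" and k: "k \<ge> 0"
    and x: "(\<Sum>i=0..<n. x i) = 0" "sq_norm n x > 0" "edge_energy n E x \<le> 2 * k * sq_norm n x"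
    and lower: "\<And>y. (\<Sum>i=0..<n. y i) = 0 \<Longrightarrow> 2 * k * sq_norm n y \<le> edge_energy n E y"
  shows "algebraic_connectivity n E = k"
proof -
  obtain P ls where len: "length ls = n" and cp: "char_poly (laplacian n E) = (\<Prod>l\<leftarrow>ls. [:- l, 1:])"
    and od: "orthogonal_diagonalization n (\<lambda>i j. P $$ (i, j)) (\<lambda>i k. laplacian n E $$ (i, k)) (\<lambda>j. ls ! j)"
    using laplacian_eigen_expansion[OF sg] by blast
  interpret orthogonal_diagonalization n "\<lambda>i j. P $$ (i, j)" "\<lambda>i k. laplacian n E $$ (i, k)" "\<lambda>j. ls ! j"
    by (rule od)
  have n: "real n > 0" using sq_norm_pos_imp_dim_pos[OF x(2)] by simp
  have "2 \<le> card {j\<in>{0..<n}. ls ! j \<le> k}"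
  proof (rule two_eigenvalues_le[of "\<lambda>_. 1" x])
    fix al be :: real assume ab: "(al, be) \<noteq> (0, 0)"
    have "al\<^sup>2 * n + be\<^sup>2 * sq_norm n x > 0"
      using ab n x(2) by (cases "be = 0") (auto intro: add_nonneg_pos)
    moreover have "be\<^sup>2 * (edge_energy n E x / 2) \<le> k * (al\<^sup>2 * n + be\<^sup>2 * sq_norm n x)"
    proof -
      have "be\<^sup>2 * (edge_energy n E x / 2) \<le> be\<^sup>2 * (k * sq_norm n x)"
        using mult_left_mono[OF x(3), of "be\<^sup>2"] by (simp add: algebra_simps)
      moreover have "k * (al\<^sup>2 * n) \<ge> 0" using k by simp
      ultimately show ?thesis by (simp add: algebra_simps)
    qed
    ultimately show "sq_norm n (\<lambda>i. al * 1 + be * x i) > 0 \<and>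
        quad_form n (\<lambda>i k. laplacian n E $$ (i, k)) (\<lambda>i. al * 1 + be * x i)
          \<le> k * sq_norm n (\<lambda>i. al * 1 + be * x i)"
      by (simp add: laplacian_quad_form[OF sg] edge_energy_affine sq_norm_affine x(1))
  qed
  moreover have "card {j\<in>{0..<n}. ls ! j < k} \<le> 1"
  proof (rule at_most_one_eigenvalue_less[of "\<lambda>_. 1"])
    fix y :: "nat \<Rightarrow> real" assume "(\<Sum>i=0..<n. 1 * y i) = 0"
    then show "quad_form n (\<lambda>i k. laplacian n E $$ (i, k)) y \<ge> k * sq_norm n y"
      using lower[of y] by (simp add: laplacian_quad_form[OF sg])
  qed
  ultimately show ?thesis
    unfolding algebraic_connectivity_def by (rule second_smallest_eigenvalue_eqI[OF laplacian_carrier cp len])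
qed

lemma algebraic_connectivity_less_card_if_not_joined:
  assumes sg: "simple_graph n E" and S: "S \<subseteq> verts n" "\<not> connected_on E (verts n - S)"
    and w: "w \<in> verts n - S" and s: "s \<in> S" and "\<not> E w s"
  shows "algebraic_connectivity n E < card S"
proof -
  obtain x :: "nat \<Rightarrow> real" where x0: "\<And>i. i \<in> S \<Longrightarrow> x i = 0"
    and xc: "\<And>i k. i < n \<Longrightarrow> k < n \<Longrightarrow> i \<notin> S \<Longrightarrow> k \<notin> S \<Longrightarrow> E i k \<Longrightarrow> x i = x k"
    and xs: "(\<Sum>i=0..<n. x i) = 0" and xnz: "\<And>i. i < n \<Longrightarrow> i \<notin> S \<Longrightarrow> x i \<noteq> 0"
    using component_test_vector[OF sg S] by blast
  have fS: "finite S" using S(1) by (rule finite_vertex_set)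
  have wn: "w < n" "w \<notin> S" using w by (auto simp: verts_def)
  have "(\<Sum>i=0..<n. if i \<notin> S then (x i)\<^sup>2 * real (card {k\<in>S. E i k}) else 0)
      < (\<Sum>i=0..<n. if i \<notin> S then (x i)\<^sup>2 * real (card S) else 0)"
  proof (rule sum_strict_mono_ex1)
    show "\<forall>i\<in>{0..<n}. (if i \<notin> S then (x i)\<^sup>2 * real (card {k\<in>S. E i k}) else 0)
        \<le> (if i \<notin> S then (x i)\<^sup>2 * real (card S) else 0)"
    proof
      fix i assume "i \<in> {0..<n}"
      have "card {k\<in>S. E i k} \<le> card S" by (rule card_mono[OF fS]) auto
      then show "(if i \<notin> S then (x i)\<^sup>2 * real (card {k\<in>S. E i k}) else 0)
          \<le> (if i \<notin> S then (x i)\<^sup>2 * real (card S) else 0)"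
        by (simp add: mult_left_mono)
    qed
    have "card {k\<in>S. E w k} < card S"
      using fS s \<open>\<not> E w s\<close> by (intro psubset_card_mono) auto
    then show "\<exists>i\<in>{0..<n}. (if i \<notin> S then (x i)\<^sup>2 * real (card {k\<in>S. E i k}) else 0)
        < (if i \<notin> S then (x i)\<^sup>2 * real (card S) else 0)"
      using wn xnz[of w] by (intro bexI[of _ w]) auto
  qed simp
  also have "\<dots> = real (card S) * sq_norm n x"
    unfolding sq_norm_def sum_distrib_left using x0 by (intro sum.cong) (auto simp: power2_eq_square)
  finally have less: "edge_energy n E x < 2 * real (card S) * sq_norm n x"
    using edge_energy_locally_constant[OF sg S(1), of x] x0 xc by auto
  have "sq_norm n x > 0" using wn xnz by (intro sq_norm_pos[of w]) auto
  moreover have "real (card S) > 0" using fS s by (auto simp: card_gt_0_iff)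
  ultimately show ?thesis by (intro algebraic_connectivity_less[OF sg _ xs _ less])
qed

lemma algebraic_connectivity_universal_separator:
  assumes sg: "simple_graph n E" and S: "S \<subseteq> verts n" "\<not> connected_on E (verts n - S)"
    and univ: "\<forall>x\<in>S. universal n E x"
  shows "algebraic_connectivity n E = card S"
proof -
  obtain x :: "nat \<Rightarrow> real" where x0: "\<And>i. i \<in> S \<Longrightarrow> x i = 0"
    and xc: "\<And>i k. i < n \<Longrightarrow> k < n \<Longrightarrow> i \<notin> S \<Longrightarrow> k \<notin> S \<Longrightarrow> E i k \<Longrightarrow> x i = x k"
    and xs: "(\<Sum>i=0..<n. x i) = 0" and xnz: "\<And>i. i < n \<Longrightarrow> i \<notin> S \<Longrightarrow> x i \<noteq> 0"
    using component_test_vector[OF sg S] by blast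
  have "{k\<in>S. E i k} = S" if "i < n" "i \<notin> S" for i
  proof -
    have "E k i" if "k \<in> S" for k
    proof -
      have "i \<noteq> k" "i \<in> verts n" using that \<open>i < n\<close> \<open>i \<notin> S\<close> by (auto simp: verts_def)
      then show ?thesis using univ that by (simp add: universal_def)
    qed
    then show ?thesis using simple_graph_sym[OF sg] by blast
  qed
  then have "(\<Sum>i=0..<n. if i \<notin> S then (x i)\<^sup>2 * real (card {k\<in>S. E i k}) else 0)
      = real (card S) * sq_norm n x"
    unfolding sq_norm_def sum_distrib_left using x0 by (intro sum.cong) (auto simp: power2_eq_square)
  then have "edge_energy n E x = 2 * real (card S) * sq_norm n x"
    using edge_energy_locally_constant[OF sg S(1), of x] x0 xc by auto
  moreover obtain u where "u \<in> verts n - S" using S(2) unfolding connected_on_def by blast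
  then have "sq_norm n x > 0" using xnz by (intro sq_norm_pos[of u]) (auto simp: verts_def)
  ultimately show ?thesis
    using univ by (intro algebraic_connectivity_eqI[OF sg _ xs]) (auto intro: edge_energy_ge_universal[OF sg S(1)])
qed

lemma vertex_connectivity_universal_separator:
  assumes sg: "simple_graph n E" and S: "S \<subseteq> verts n" "\<not> connected_on E (verts n - S)"
    and univ: "\<forall>x\<in>S. universal n E x"
  shows "vertex_connectivity n E = card S"
proof (rule vertex_connectivity_eqI[OF S])
  fix T assume "T \<subseteq> verts n" "\<not> connected_on E (verts n - T)"
  moreover from this have "S \<subseteq> T" using univ universal_mem_disconnecting_set[OF sg] by blast
  ultimately show "card S \<le> card T" by (intro card_mono finite_vertex_set)
qed

lemma minimum_disconnecting_set_minimal_separator: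
  assumes S: "S \<subseteq> verts n" "\<not> connected_on E (verts n - S)"
    and min: "\<And>T. T \<subseteq> verts n \<Longrightarrow> \<not> connected_on E (verts n - T) \<Longrightarrow> card S \<le> card T"
  obtains u v where "u \<in> verts n - S" "v \<in> verts n - S" "u \<noteq> v" "\<not> E u v"
    "minimal_vertex_separator n E S"
proof -
  obtain u v where uv: "u \<in> verts n - S" "v \<in> verts n - S" "(u, v) \<notin> (induced_rel E (verts n - S))\<^sup>*"
    using S(2) unfolding connected_on_def by blast
  then have "u \<noteq> v" by auto
  have nE: "\<not> E u v"
  proof
    assume "E u v"
    then have "(u, v) \<in> (induced_rel E (verts n - S))\<^sup>*"
      using uv(1,2) by (rule induced_rel_rtrancl_edge[rotated 2])
    then show False using uv(3) by contradiction
  qed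
  have "minimal_uv_separator n E S u v"
    unfolding minimal_uv_separator_def
  proof (intro conjI allI impI notI)
    show "uv_separator n E S u v" using S(1) uv by (simp add: uv_separator_def)
    fix T assume "T \<subset> S" "uv_separator n E T u v"
    then have "T \<subseteq> verts n \<and> \<not> connected_on E (verts n - T)"
      by (simp add: uv_separator_disconnects)
    then have "card S \<le> card T" using min[of T] by blast
    moreover have "card T < card S"
      by (rule psubset_card_mono[OF finite_vertex_set[OF S(1)] \<open>T \<subset> S\<close>])
    ultimately show False by simp
  qed
  moreover have "u \<in> verts n" "v \<in> verts n" using uv by auto
  ultimately have "minimal_vertex_separator n E S"
    unfolding minimal_vertex_separator_def using \<open>u \<noteq> v\<close> nE by blast
  then show ?thesis using that uv(1,2) \<open>u \<noteq> v\<close> nE by blast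
qed

lemma universal_minimal_separator_if_connectivities_eq:
  assumes sg: "simple_graph n E" and ch: "chordal n E" and nc: "\<not> complete_graph n E"
    and eq: "real (vertex_connectivity n E) = algebraic_connectivity n E"
  obtains S where "minimal_vertex_separator n E S" "\<forall>x\<in>S. universal n E x"
proof -
  obtain S where S: "S \<subseteq> verts n" "\<not> connected_on E (verts n - S)" "vertex_connectivity n E = card S"
    and min: "\<And>T. T \<subseteq> verts n \<Longrightarrow> \<not> connected_on E (verts n - T) \<Longrightarrow> card S \<le> card T"
    using vertex_connectivity_attained[OF sg nc] by metis
  obtain u v where uv: "u \<in> verts n - S" "v \<in> verts n - S" "u \<noteq> v" "\<not> E u v"
    and sep: "minimal_vertex_separator n E S"
    using minimum_disconnecting_set_minimal_separator[OF S(1,2) min] by metis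
  have join: "\<forall>w\<in>verts n - S. \<forall>s\<in>S. E w s"
    using algebraic_connectivity_less_card_if_not_joined[OF sg S(1,2)] eq S(3) by force
  have "universal n E x" if x: "x \<in> S" for x
    unfolding universal_def
  proof (intro conjI ballI impI)
    show "x \<in> verts n" using x S(1) by auto
    fix w assume "w \<in> verts n" "w \<noteq> x"
    then show "E x w"
      using chordal_joined_set_is_clique[OF sg ch S(1) uv join x] join x
        simple_graph_sym[OF sg] uv by (cases "w \<in> S") auto
  qed
  then show ?thesis using that sep by blast
qed

lemma universal_separator_subset:
  "simple_graph n E \<Longrightarrow> \<forall>x\<in>S. universal n E x \<Longrightarrow> minimal_vertex_separator n E T \<Longrightarrow> S \<subseteq> T"
  using universal_mem_disconnecting_set minimal_vertex_separator_disconnects by blast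

theorem mainTheorem2:
  fixes n :: nat and E :: "nat \<Rightarrow> nat \<Rightarrow> bool"
  assumes "simple_graph n E"
    and "chordal n E"
    and "connected_on E (verts n)"
    and "\<not> complete_graph n E"
  shows "(real (vertex_connectivity n E) = algebraic_connectivity n E \<longleftrightarrow>
            (minimal_vertex_separator n E (\<Inter> {S. minimal_vertex_separator n E S}) \<and>
             (\<forall>x \<in> \<Inter> {S. minimal_vertex_separator n E S}. universal n E x)))
       \<and> (\<forall>S. minimal_vertex_separator n E S \<and> (\<forall>x\<in>S. universal n E x) \<longrightarrow>
            (\<forall>T. minimal_vertex_separator n E T \<longrightarrow> S \<subseteq> T) \<and>
            (\<forall>T. minimal_vertex_separator n E T \<and> (\<forall>x\<in>T. universal n E x) \<longrightarrow> T = S))"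
proof -
  note sg = assms(1)
  let ?I = "\<Inter> {S. minimal_vertex_separator n E S}"
  have Inter_eq: "?I = S" if "minimal_vertex_separator n E S" "\<forall>x\<in>S. universal n E x" for S
    using that universal_separator_subset[OF sg] by blast
  show ?thesis
  proof (rule conjI)
    show "real (vertex_connectivity n E) = algebraic_connectivity n E \<longleftrightarrow>
        minimal_vertex_separator n E ?I \<and> (\<forall>x\<in>?I. universal n E x)"
    proof
      assume "real (vertex_connectivity n E) = algebraic_connectivity n E"
      then obtain S where "minimal_vertex_separator n E S" "\<forall>x\<in>S. universal n E x"
        using universal_minimal_separator_if_connectivities_eq[OF sg assms(2,4)] by blast
      then show "minimal_vertex_separator n E ?I \<and> (\<forall>x\<in>?I. universal n E x)"
        using Inter_eq by simp
    next
      assume "minimal_vertex_separator n E ?I \<and> (\<forall>x\<in>?I. universal n E x)"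
      then show "real (vertex_connectivity n E) = algebraic_connectivity n E"
        using minimal_vertex_separator_disconnects vertex_connectivity_universal_separator[OF sg]
          algebraic_connectivity_universal_separator[OF sg] by metis
    qed
  qed (use universal_separator_subset[OF sg] in blast)
qed

end
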